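(* For every integer $m\geq 5$ there exist a ranking profile $R$ over $m$ candidates and a ranking $\succ\in\mathcal{R}$ such that $R(\succ)=\frac{m}{5}\big/\binom{m}{2}$ and every ranking $\rhd$ chosen by the Squared Kemeny rule for $R$ (i.e., every minimizer of $\sum_{\succ'\in\mathcal{R}}R(\succ')\,\mathit{swap}(\succ',\rhd)^2$, under any tie-breaking) satisfies $u(\succ,\rhd)=0$.
   Context: Let $C=\{x_1,\dots,x_m\}$ be a set of $m$ candidates. A ranking is a strict linear order over $C$; $\mathcal{R}$ denotes the set of all rankings over $C$. A ranking profile is a function $R:\mathcal{R}\to[0,1]$ with $\sum_{\succ\in\mathcal{R}}R(\succ)=1$. For rankings $\succ,\rhd$, the utility is $u(\succ,\rhd)=|\{(x,y)\in C^2: x\succ y \text{ and } x\rhd y\}|$ and the swap distance is $\mathit{swap}(\succ,\rhd)=|\{(x,y)\in C^2: x\succ y\text{ and } y\rhd x\}|=\binom{m}{2}-u(\succ,\rhd)$. The Squared Kemeny rule chooses a ranking $\rhd\in\mathcal{R}$ minimizing $\sum_{\succ\in\mathcal{R}}R(\succ)\,\mathit{swap}(\succ,\rhd)^2$. *)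

theory Defs
  imports Complex_Main
begin

definition cands :: "nat \<Rightarrow> nat set" where
  "cands m = {0..<m}"

definition rankings :: "nat \<Rightarrow> (nat \<times> nat) set set" where
  "rankings m = {r. r \<subseteq> cands m \<times> cands m \<and> strict_linear_order_on (cands m) r}"

definition util :: "(nat \<times> nat) set \<Rightarrow> (nat \<times> nat) set \<Rightarrow> nat" where
  "util r s = card (r \<inter> s)"

text \<open>Swap distance: number of pairs ordered x over y by r and y over x by s.\<close>
definition swap :: "(nat \<times> nat) set \<Rightarrow> (nat \<times> nat) set \<Rightarrow> nat" where
  "swap r s = card {(x, y). (x, y) \<in> r \<and> (y, x) \<in> s}"

definition is_profile :: "nat \<Rightarrow> ((nat \<times> nat) set \<Rightarrow> real) \<Rightarrow> bool" where
  "is_profile m R \<longleftrightarrow> (\<forall>r. R r \<ge> 0 \<and> R r \<le> 1) \<and> (\<forall>r. r \<notin> rankings m \<longrightarrow> R r = 0)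
     \<and> (\<Sum>r\<in>rankings m. R r) = 1"

definition sq_kemeny_cost :: "nat \<Rightarrow> ((nat \<times> nat) set \<Rightarrow> real) \<Rightarrow> (nat \<times> nat) set \<Rightarrow> real" where
  "sq_kemeny_cost m R t = (\<Sum>r\<in>rankings m. R r * (real (swap r t))^2)"

definition sq_kemeny :: "nat \<Rightarrow> ((nat \<times> nat) set \<Rightarrow> real) \<Rightarrow> (nat \<times> nat) set set" where
  "sq_kemeny m R = {t \<in> rankings m. \<forall>t'\<in>rankings m. sq_kemeny_cost m R t \<le> sq_kemeny_cost m R t'}"

end

theory Submission
  imports Defs
begin

text \<open>The profile puts weight \<open>p = (m/5) / C(m,2)\<close> on the ranking \<open>0 \<succ> 1 \<succ> \<dots> \<succ> m-1\<close> and
spreads the remaining weight evenly over the \<open>2m\<close> rankings obtained from the reversed ranking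
by moving one candidate \<open>c\<close> to the top or to the bottom. Describe a ranking \<open>t\<close> by its set \<open>T\<close> of
ascents, the pairs \<open>x < y\<close> that \<open>t\<close> ranks as \<open>x \<succ> y\<close>. The swap distance of \<open>t\<close> to each voter is
then an affine function of \<open>|T|\<close> and of the out- and in-degrees of \<open>c\<close> in \<open>T\<close>, while
transitivity of \<open>t\<close> forces \<open>y - x < out(x) + in(y)\<close> for every ascent \<open>(x, y)\<close>. Summed over \<open>T\<close>,
this bound shows that every \<open>t\<close> with an ascent has a strictly larger squared cost than the
reversed ranking, so every Squared Kemeny winner reverses all preferences of the first voter.\<close>

lemma rankings_bounded: "s \<in> rankings m \<Longrightarrow> (x, y) \<in> s \<Longrightarrow> x < m \<and> y < m"
  by (auto simp: rankings_def cands_def)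

lemma rankings_irrefl: "s \<in> rankings m \<Longrightarrow> (x, x) \<notin> s"
  by (auto simp: rankings_def strict_linear_order_on_def irrefl_on_def)

lemma rankings_trans: "s \<in> rankings m \<Longrightarrow> (x, y) \<in> s \<Longrightarrow> (y, z) \<in> s \<Longrightarrow> (x, z) \<in> s"
  unfolding rankings_def strict_linear_order_on_def trans_def by blast

lemma rankings_converse_iff:
  assumes "s \<in> rankings m" "x < m" "y < m" "x \<noteq> y"
  shows "(y, x) \<in> s \<longleftrightarrow> (x, y) \<notin> s"
proof
  assume "(y, x) \<in> s"
  then show "(x, y) \<notin> s" using assms(1) rankings_trans rankings_irrefl by blast
next
  assume "(x, y) \<notin> s"
  moreover have "total_on (cands m) s"
    using assms(1) by (simp add: rankings_def strict_linear_order_on_def)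
  ultimately show "(y, x) \<in> s"
    using assms(2-4) unfolding total_on_def cands_def by (metis atLeastLessThan_iff le0)
qed

definition ranking_by :: "nat \<Rightarrow> (nat \<Rightarrow> 'a::linorder) \<Rightarrow> (nat \<times> nat) set" where
  "ranking_by m f = {(x, y). x < m \<and> y < m \<and> f x < f y}"

lemma ranking_by_in_rankings:
  assumes "inj_on f {..<m}"
  shows "ranking_by m f \<in> rankings m"
proof -
  have "f x \<noteq> f y" if "x < m" "y < m" "x \<noteq> y" for x y
    using assms that by (metis inj_onD lessThan_iff)
  then have "total_on (cands m) (ranking_by m f)"
    by (auto simp: total_on_def ranking_by_def cands_def neq_iff)
  then show ?thesis
    by (auto simp: rankings_def strict_linear_order_on_def ranking_by_def cands_def
        trans_def irrefl_on_def)
qed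

definition ascending :: "nat \<Rightarrow> (nat \<times> nat) set" where
  "ascending m = {(x, y). x < y \<and> y < m}"

lemma finite_ascending: "finite (ascending m)"
  by (rule finite_subset[of _ "{..<m} \<times> {..<m}"]) (auto simp: ascending_def)

lemma ascending_in_rankings: "ascending m \<in> rankings m"
proof -
  have "ascending m = ranking_by m id" by (auto simp: ascending_def ranking_by_def)
  then show ?thesis by (simp add: ranking_by_in_rankings)
qed

lemma swap_rankings:
  assumes s: "s \<in> rankings m" and t: "t \<in> rankings m"
  shows "swap s t = card (ascending m \<inter> s - t) + card (ascending m \<inter> t - s)"
proof -
  have "(x, y) \<in> s \<and> (y, x) \<in> t \<longleftrightarrow>
      (x, y) \<in> ascending m \<inter> s - t \<or> (y, x) \<in> ascending m \<inter> t - s" for x y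
  proof (cases "x < m \<and> y < m \<and> x \<noteq> y")
    case True
    then show ?thesis
      using rankings_converse_iff[OF s, of x y] rankings_converse_iff[OF t, of x y] by (auto simp: ascending_def)
  next
    case False
    then show ?thesis
      using rankings_bounded[OF s, of x y] rankings_irrefl[OF s, of x] by (auto simp: ascending_def)
  qed
  then have "{(x, y). (x, y) \<in> s \<and> (y, x) \<in> t} = (ascending m \<inter> s - t) \<union> (ascending m \<inter> t - s)\<inverse>"
    by auto
  moreover have "(ascending m \<inter> s - t) \<inter> (ascending m \<inter> t - s)\<inverse> = {}"
    by (auto simp: ascending_def)
  ultimately show ?thesis
    by (simp add: swap_def card_Un_disjoint finite_ascending)
qed

lemma real_swap_rankings:
  assumes "s \<in> rankings m" "t \<in> rankings m"
  shows "real (swap s t) = real (card (ascending m \<inter> s)) + real (card (ascending m \<inter> t))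
    - 2 * real (card (ascending m \<inter> s \<inter> t))"
proof -
  have card_Diff: "real (card (ascending m \<inter> a - b)) =
      real (card (ascending m \<inter> a)) - real (card (ascending m \<inter> a \<inter> b))" for a b
  proof -
    have "card (ascending m \<inter> a \<inter> b) \<le> card (ascending m \<inter> a)"
      using finite_ascending by (intro card_mono) auto
    then show ?thesis
      by (simp add: card_Diff_subset_Int finite_ascending of_nat_diff)
  qed
  show ?thesis
    using card_Diff[of s t] card_Diff[of t s] by (simp add: swap_rankings[OF assms] Int_ac)
qed

definition out_degree :: "('a \<times> 'a) set \<Rightarrow> 'a \<Rightarrow> nat" where
  "out_degree T x = card (T `` {x})"

definition in_degree :: "('a \<times> 'a) set \<Rightarrow> 'a \<Rightarrow> nat" where
  "in_degree T y = card (T\<inverse> `` {y})"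

lemma card_fst_fibre: "card {e \<in> T. fst e = x} = out_degree T x"
proof -
  have "{e \<in> T. fst e = x} = Pair x ` (T `` {x})" by force
  then show ?thesis by (simp add: out_degree_def card_image inj_on_def)
qed

lemma card_snd_fibre: "card {e \<in> T. snd e = y} = in_degree T y"
proof -
  have "{e \<in> T. snd e = y} = (\<lambda>x. (x, y)) ` (T\<inverse> `` {y})" by force
  then show ?thesis by (simp add: in_degree_def card_image inj_on_def)
qed

lemma sum_comp_fibres:
  fixes f :: "'b \<Rightarrow> 'c::comm_semiring_1"
  assumes "finite T" "finite A" "g ` T \<subseteq> A"
  shows "(\<Sum>e\<in>T. f (g e)) = (\<Sum>x\<in>A. of_nat (card {e \<in> T. g e = x}) * f x)"
proof -
  have "(\<Sum>e\<in>T. f (g e)) = (\<Sum>x\<in>A. \<Sum>e\<in>{e \<in> T. g e = x}. f (g e))"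
    using sum.group[OF assms, of "\<lambda>e. f (g e)"] by simp
  also have "\<dots> = (\<Sum>x\<in>A. of_nat (card {e \<in> T. g e = x}) * f x)"
    by (intro sum.cong) auto
  finally show ?thesis .
qed

lemma sum_out_degree:
  assumes "finite T" "finite A" "fst ` T \<subseteq> A"
  shows "(\<Sum>x\<in>A. out_degree T x) = card T"
  using sum_comp_fibres[OF assms, of "\<lambda>_. 1 :: nat"] by (simp add: card_fst_fibre)

lemma sum_in_degree:
  assumes "finite T" "finite A" "snd ` T \<subseteq> A"
  shows "(\<Sum>x\<in>A. in_degree T x) = card T"
  using sum_comp_fibres[OF assms, of "\<lambda>_. 1 :: nat"] by (simp add: card_snd_fibre)

lemma ascent_span_less_degrees:
  assumes t: "t \<in> rankings m" and xy: "(x, y) \<in> ascending m \<inter> t"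
  defines "T \<equiv> ascending m \<inter> t"
  shows "y - x < out_degree T x + in_degree T y"
proof -
  have "x < y" "y < m" using xy by (auto simp: ascending_def)
  have fin: "finite (T `` {x})" "finite (T\<inverse> `` {y})"
    using finite_ascending by (auto simp: T_def)
  have "{x<..<y} \<subseteq> (T `` {x} - {y}) \<union> (T\<inverse> `` {y} - {x})"
  proof
    fix z assume z: "z \<in> {x<..<y}"
    show "z \<in> (T `` {x} - {y}) \<union> (T\<inverse> `` {y} - {x})"
    proof (cases "(x, z) \<in> t")
      case True
      then show ?thesis using z \<open>y < m\<close> by (auto simp: T_def ascending_def)
    next
      case False
      then have "(z, x) \<in> t" using rankings_converse_iff[OF t, of x z] z \<open>y < m\<close> by auto
      then have "(z, y) \<in> t" using rankings_trans[OF t] xy by blast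
      then show ?thesis using z \<open>y < m\<close> by (auto simp: T_def ascending_def)
    qed
  qed
  then have "card {x<..<y} \<le> card (T `` {x} - {y}) + card (T\<inverse> `` {y} - {x})"
    using fin by (meson card_Un_le card_mono finite_Diff finite_UnI le_trans)
  moreover have "y \<in> T `` {x}" "x \<in> T\<inverse> `` {y}" using xy by (auto simp: T_def)
  then have "card (T `` {x} - {y}) = out_degree T x - 1" "card (T\<inverse> `` {y} - {x}) = in_degree T y - 1"
    "out_degree T x > 0" "in_degree T y > 0"
    using fin by (auto simp: out_degree_def in_degree_def card_gt_0_iff)
  ultimately show ?thesis by simp
qed

lemma degree_moment_bound:
  assumes t: "t \<in> rankings m"
  defines "T \<equiv> ascending m \<inter> t"
  shows "real (card T) \<le> (\<Sum>c<m. real c * (real (out_degree T c) - real (in_degree T c))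
    + (real (out_degree T c))\<^sup>2 + (real (in_degree T c))\<^sup>2)"
proof -
  have fin: "finite T" using finite_ascending by (simp add: T_def)
  have range: "fst ` T \<subseteq> {..<m}" "snd ` T \<subseteq> {..<m}" by (auto simp: T_def ascending_def)
  have "(\<Sum>e\<in>T. real (snd e) - real (fst e))
      \<le> (\<Sum>e\<in>T. real (out_degree T (fst e)) + real (in_degree T (snd e)) - 1)"
  proof (intro sum_mono)
    fix e assume "e \<in> T"
    then show "real (snd e) - real (fst e) \<le> real (out_degree T (fst e)) + real (in_degree T (snd e)) - 1"
      using ascent_span_less_degrees[OF t, of "fst e" "snd e"] by (auto simp: T_def ascending_def)
  qed
  then show ?thesis
    using sum_comp_fibres[OF fin finite_lessThan range(1), of real]
      sum_comp_fibres[OF fin finite_lessThan range(2), of real]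
      sum_comp_fibres[OF fin finite_lessThan range(1), of "\<lambda>c. real (out_degree T c)"]
      sum_comp_fibres[OF fin finite_lessThan range(2), of "\<lambda>c. real (in_degree T c)"]
    by (simp add: sum_subtractf sum.distrib card_fst_fibre card_snd_fibre power2_eq_square
        algebra_simps)
qed

definition descending :: "nat \<Rightarrow> (nat \<times> nat) set" where
  "descending m = ranking_by m (\<lambda>x. - int x)"

definition rev_top :: "nat \<Rightarrow> nat \<Rightarrow> (nat \<times> nat) set" where
  "rev_top m c = ranking_by m (\<lambda>x. if x = c then - int m else - int x)"

definition rev_bottom :: "nat \<Rightarrow> nat \<Rightarrow> (nat \<times> nat) set" where
  "rev_bottom m c = ranking_by m (\<lambda>x. if x = c then 1 else - int x)"

lemma descending_in_rankings: "descending m \<in> rankings m"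
  unfolding descending_def by (rule ranking_by_in_rankings) (simp add: inj_on_def)

lemma rev_top_in_rankings: "rev_top m c \<in> rankings m"
  unfolding rev_top_def by (rule ranking_by_in_rankings) (auto simp: inj_on_def split: if_splits)

lemma rev_bottom_in_rankings: "rev_bottom m c \<in> rankings m"
  unfolding rev_bottom_def by (rule ranking_by_in_rankings) (auto simp: inj_on_def split: if_splits)

lemma ascending_Int_descending: "ascending m \<inter> descending m = {}"
  by (auto simp: ascending_def descending_def ranking_by_def)

lemma ascending_Int_rev_top: "c < m \<Longrightarrow> ascending m \<inter> rev_top m c = {c} \<times> {c<..<m}"
  by (auto simp: ascending_def rev_top_def ranking_by_def split: if_splits)

lemma ascending_Int_rev_bottom: "c < m \<Longrightarrow> ascending m \<inter> rev_bottom m c = {..<c} \<times> {c}"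
  by (auto simp: ascending_def rev_bottom_def ranking_by_def split: if_splits)

lemma card_ascending: "card (ascending m) = m choose 2"
proof (induction m)
  case 0
  then show ?case by (simp add: ascending_def)
next
  case (Suc m)
  have "ascending (Suc m) = ascending m \<union> {..<m} \<times> {m}"
    by (auto simp: ascending_def)
  moreover have "ascending m \<inter> {..<m} \<times> {m} = {}" by (auto simp: ascending_def)
  ultimately have "card (ascending (Suc m)) = card (ascending m) + m"
    by (simp add: card_Un_disjoint finite_ascending)
  then show ?case using Suc by (simp add: numeral_2_eq_2)
qed

lemma real_swap_ascending:
  assumes "t \<in> rankings m"
  shows "real (swap (ascending m) t) = real (m choose 2) - real (card (ascending m \<inter> t))"
  using real_swap_rankings[OF ascending_in_rankings assms] by (simp add: card_ascending Int_assoc)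

lemma real_swap_rev_top:
  assumes t: "t \<in> rankings m" and c: "c < m"
  defines "T \<equiv> ascending m \<inter> t"
  shows "real (swap (rev_top m c) t)
    = real m - 1 - real c + real (card T) - 2 * real (out_degree T c)"
proof -
  have "ascending m \<inter> rev_top m c \<inter> t = ({c} \<times> {c<..<m}) \<inter> t"
    by (simp add: ascending_Int_rev_top[OF c])
  also have "\<dots> = {c} \<times> (T `` {c})"
    by (auto simp: T_def ascending_def)
  finally have "ascending m \<inter> rev_top m c \<inter> t = {c} \<times> (T `` {c})" .
  then show ?thesis
    using real_swap_rankings[OF rev_top_in_rankings t] c
    by (simp add: ascending_Int_rev_top out_degree_def T_def of_nat_diff card_cartesian_product)
qed

lemma real_swap_rev_bottom:
  assumes t: "t \<in> rankings m" and c: "c < m"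
  defines "T \<equiv> ascending m \<inter> t"
  shows "real (swap (rev_bottom m c) t) = real c + real (card T) - 2 * real (in_degree T c)"
proof -
  have "ascending m \<inter> rev_bottom m c \<inter> t = ({..<c} \<times> {c}) \<inter> t"
    by (simp add: ascending_Int_rev_bottom[OF c])
  also have "\<dots> = (T\<inverse> `` {c}) \<times> {c}"
    using c by (auto simp: T_def ascending_def)
  finally have "ascending m \<inter> rev_bottom m c \<inter> t = (T\<inverse> `` {c}) \<times> {c}" .
  then show ?thesis
    using real_swap_rankings[OF rev_bottom_in_rankings t] c
    by (simp add: ascending_Int_rev_bottom in_degree_def T_def card_cartesian_product)
qed

lemma real_choose_two: "real (m choose 2) = real m * (real m - 1) / 2"
  by (induction m) (simp_all add: numeral_2_eq_2 field_simps)

definition asc_weight :: "nat \<Rightarrow> real" where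
  "asc_weight m = (real m / 5) / real (m choose 2)"

definition rev_weight :: "nat \<Rightarrow> real" where
  "rev_weight m = (1 - asc_weight m) / (2 * real m)"

definition adversarial_profile :: "nat \<Rightarrow> (nat \<times> nat) set \<Rightarrow> real" where
  "adversarial_profile m s = asc_weight m * of_bool (s = ascending m)
     + rev_weight m * (\<Sum>c<m. of_bool (s = rev_top m c) + of_bool (s = rev_bottom m c))"

lemma finite_rankings: "finite (rankings m)"
proof (rule finite_subset)
  show "rankings m \<subseteq> Pow ({..<m} \<times> {..<m})"
    by (auto dest: rankings_bounded)
qed simp

lemma sum_adversarial_profile:
  "(\<Sum>s\<in>rankings m. adversarial_profile m s * g s)
    = asc_weight m * g (ascending m) + rev_weight m * (\<Sum>c<m. g (rev_top m c) + g (rev_bottom m c))"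
proof -
  have delta: "(\<Sum>s\<in>rankings m. x * (g s * of_bool (s = a))) = x * g a"
    if "a \<in> rankings m" for a x
  proof -
    have "rankings m \<inter> {s. s = a} = {a}" using that by auto
    then show ?thesis
      by (simp add: sum_distrib_left[symmetric] sum_mult_of_bool_eq[OF finite_rankings])
  qed
  show ?thesis
    unfolding adversarial_profile_def
    by (simp add: algebra_simps sum.distrib sum_distrib_left sum_distrib_right
        sum.swap[of _ "{..<m}"] delta ascending_in_rankings rev_top_in_rankings
        rev_bottom_in_rankings del: sum_of_bool_eq sum_of_bool_mult_eq sum_mult_of_bool_eq)
qed

lemma sq_kemeny_cost_adversarial_profile:
  assumes t: "t \<in> rankings m"
  defines "T \<equiv> ascending m \<inter> t"
  shows "sq_kemeny_cost m (adversarial_profile m) t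
    = asc_weight m * (real (m choose 2) - real (card T))\<^sup>2
      + rev_weight m * (\<Sum>c<m. (real m - 1 - real c + real (card T) - 2 * real (out_degree T c))\<^sup>2
          + (real c + real (card T) - 2 * real (in_degree T c))\<^sup>2)"
  unfolding sq_kemeny_cost_def sum_adversarial_profile
  by (simp add: real_swap_ascending[OF t] real_swap_rev_top[OF t] real_swap_rev_bottom[OF t] T_def)

lemma sum_shifted_squares_ge:
  fixes r k :: "nat \<Rightarrow> real"
  assumes "(\<Sum>c<m. r c) = d" "(\<Sum>c<m. k c) = d"
    and "d \<le> (\<Sum>c<m. real c * (r c - k c) + (r c)\<^sup>2 + (k c)\<^sup>2)"
  shows "(\<Sum>c<m. (real m - 1 - real c)\<^sup>2 + (real c)\<^sup>2)
      + 2 * d * ((real m)\<^sup>2 - 3 * real m + 4) + 2 * (real m - 4) * d\<^sup>2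
    \<le> (\<Sum>c<m. (real m - 1 - real c + d - 2 * r c)\<^sup>2 + (real c + d - 2 * k c)\<^sup>2)"
proof -
  define M where "M = real m"
  define q where "q c = real c * (r c - k c) + (r c)\<^sup>2 + (k c)\<^sup>2" for c
  have "(M - 1 - real c + d - 2 * r c)\<^sup>2 + (real c + d - 2 * k c)\<^sup>2
      = ((M - 1 - real c)\<^sup>2 + (real c)\<^sup>2) + (2 * (M - 1) * d + 2 * d\<^sup>2)
        - (4 * (M - 1) + 4 * d) * r c - 4 * d * k c + 4 * q c" for c
    by (simp add: q_def power2_eq_square algebra_simps)
  then have "(\<Sum>c<m. (M - 1 - real c + d - 2 * r c)\<^sup>2 + (real c + d - 2 * k c)\<^sup>2)
      = (\<Sum>c<m. (M - 1 - real c)\<^sup>2 + (real c)\<^sup>2) + M * (2 * (M - 1) * d + 2 * d\<^sup>2)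
        - (4 * (M - 1) + 4 * d) * d - 4 * d * d + 4 * (\<Sum>c<m. q c)"
    by (simp add: sum.distrib sum_subtractf sum_distrib_left[symmetric] assms(1,2) M_def)
  moreover have "d \<le> (\<Sum>c<m. q c)" using assms(3) by (simp add: q_def)
  ultimately show ?thesis
    by (simp add: M_def[symmetric] power2_eq_square algebra_simps)
qed

lemma asc_weight_eq: "m \<ge> 2 \<Longrightarrow> asc_weight m = 2 / (5 * (real m - 1))"
  by (simp add: asc_weight_def real_choose_two field_simps)

lemma rev_weight_eq: "m \<ge> 2 \<Longrightarrow> rev_weight m = (5 * real m - 7) / (10 * real m * (real m - 1))"
  by (simp add: rev_weight_def asc_weight_eq field_simps)

lemma adversarial_weights_gain:
  assumes m: "m \<ge> 4" and d: "d > 0"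
  defines "N \<equiv> real (m choose 2)" and "M \<equiv> real m"
  shows "asc_weight m * N\<^sup>2
    < asc_weight m * (N - d)\<^sup>2 + rev_weight m * (2 * d * (M\<^sup>2 - 3 * M + 4) + 2 * (M - 4) * d\<^sup>2)"
proof -
  have M: "M \<ge> 4" using m by (simp add: M_def)
  have p: "asc_weight m = 2 / (5 * (M - 1))" and w: "rev_weight m = (5 * M - 7) / (10 * M * (M - 1))"
    using m by (simp_all add: asc_weight_eq rev_weight_eq M_def)
  have N: "N = M * (M - 1) / 2" by (simp add: N_def M_def real_choose_two)
  have "3 * M ^ 3 - 20 * M\<^sup>2 + 41 * M - 28 = (M - 4) * (M * (3 * M - 8) + 9) + 8"
    by (simp add: power2_eq_square power3_eq_cube algebra_simps)
  moreover have "M * (3 * M - 8) + 9 \<ge> 0"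
    using M by simp
  ultimately have cubic: "3 * M ^ 3 - 20 * M\<^sup>2 + 41 * M - 28 > 0"
    using M by (smt (verit) mult_nonneg_nonneg)
  have "rev_weight m * (M\<^sup>2 - 3 * M + 4) - M / 5 = (3 * M ^ 3 - 20 * M\<^sup>2 + 41 * M - 28) / (10 * M * (M - 1))"
    using M by (simp add: w field_simps power2_eq_square power3_eq_cube)
  then have linear: "rev_weight m * (M\<^sup>2 - 3 * M + 4) \<ge> M / 5"
    using cubic M by (smt (verit) divide_nonneg_pos mult_pos_pos)
  have "asc_weight m * N = M / 5"
    using M by (simp add: p N field_simps)
  then have "asc_weight m * (N - d)\<^sup>2 - asc_weight m * N\<^sup>2 = asc_weight m * d\<^sup>2 - 2 * d * (M / 5)"
    by (simp add: power2_eq_square algebra_simps flip: \<open>asc_weight m * N = M / 5\<close>)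
  moreover have "asc_weight m * d\<^sup>2 > 0" using M d by (simp add: p)
  moreover have "rev_weight m * (2 * (M - 4) * d\<^sup>2) \<ge> 0" using M by (simp add: w)
  moreover have "rev_weight m * (2 * d * (M\<^sup>2 - 3 * M + 4)) \<ge> 2 * d * (M / 5)"
    using mult_left_mono[OF linear, of "2 * d"] d by (simp add: algebra_simps)
  ultimately show ?thesis by (simp add: distrib_left)
qed

lemma sq_kemeny_cost_descending_less:
  assumes m: "m \<ge> 4" and t: "t \<in> rankings m" and ascent: "ascending m \<inter> t \<noteq> {}"
  shows "sq_kemeny_cost m (adversarial_profile m) (descending m)
    < sq_kemeny_cost m (adversarial_profile m) t"
proof -
  define T where "T = ascending m \<inter> t"
  define d where "d = real (card T)"
  define N where "N = real (m choose 2)"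
  define M where "M = real m"
  define base where "base = (\<Sum>c<m. (M - 1 - real c)\<^sup>2 + (real c)\<^sup>2)"
  have fin: "finite T" using finite_ascending by (simp add: T_def)
  have range: "fst ` T \<subseteq> {..<m}" "snd ` T \<subseteq> {..<m}" by (auto simp: T_def ascending_def)
  have "d > 0" using ascent fin by (simp add: d_def T_def card_gt_0_iff)
  have "base + 2 * d * (M\<^sup>2 - 3 * M + 4) + 2 * (M - 4) * d\<^sup>2
      \<le> (\<Sum>c<m. (M - 1 - real c + d - 2 * real (out_degree T c))\<^sup>2
          + (real c + d - 2 * real (in_degree T c))\<^sup>2)"
    unfolding base_def M_def
  proof (rule sum_shifted_squares_ge)
    show "(\<Sum>c<m. real (out_degree T c)) = d" "(\<Sum>c<m. real (in_degree T c)) = d"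
      using sum_out_degree[OF fin _ range(1)] sum_in_degree[OF fin _ range(2)]
      by (simp_all add: d_def flip: of_nat_sum)
    show "d \<le> (\<Sum>c<m. real c * (real (out_degree T c) - real (in_degree T c))
        + (real (out_degree T c))\<^sup>2 + (real (in_degree T c))\<^sup>2)"
      using degree_moment_bound[OF t] by (simp add: d_def T_def)
  qed
  moreover have "rev_weight m \<ge> 0"
    using m by (simp add: rev_weight_eq)
  ultimately have "rev_weight m * (2 * d * (M\<^sup>2 - 3 * M + 4) + 2 * (M - 4) * d\<^sup>2) + rev_weight m * base
      \<le> rev_weight m * (\<Sum>c<m. (M - 1 - real c + d - 2 * real (out_degree T c))\<^sup>2
          + (real c + d - 2 * real (in_degree T c))\<^sup>2)"
    by (simp flip: distrib_left add: mult_left_mono add.commute)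
  moreover have "sq_kemeny_cost m (adversarial_profile m) (descending m) = asc_weight m * N\<^sup>2 + rev_weight m * base"
    using sq_kemeny_cost_adversarial_profile[OF descending_in_rankings, of m]
    by (simp add: ascending_Int_descending out_degree_def in_degree_def N_def M_def base_def)
  moreover have "sq_kemeny_cost m (adversarial_profile m) t = asc_weight m * (N - d)\<^sup>2
      + rev_weight m * (\<Sum>c<m. (M - 1 - real c + d - 2 * real (out_degree T c))\<^sup>2
          + (real c + d - 2 * real (in_degree T c))\<^sup>2)"
    using sq_kemeny_cost_adversarial_profile[OF t] by (simp add: T_def d_def N_def M_def)
  ultimately show ?thesis
    using adversarial_weights_gain[OF m \<open>d > 0\<close>] by (simp add: N_def M_def)
qed

lemma adversarial_profile_is_profile:
  assumes m: "m \<ge> 2"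
  shows "is_profile m (adversarial_profile m)"
proof -
  have weights: "0 \<le> asc_weight m" "0 \<le> rev_weight m" "asc_weight m + 2 * real m * rev_weight m = 1"
    using m by (simp_all add: asc_weight_eq rev_weight_def)
  have bound: "(\<Sum>c<m. of_bool (s = rev_top m c) + of_bool (s = rev_bottom m c)) \<le> (\<Sum>c<m. 2 :: real)" for s
    by (intro sum_mono) simp
  have "adversarial_profile m s \<le> asc_weight m * 1 + rev_weight m * (\<Sum>c<m. 2 :: real)" for s
    unfolding adversarial_profile_def
    using weights bound by (intro add_mono mult_left_mono) auto
  then have "adversarial_profile m s \<le> 1" for s
    using weights by (simp add: algebra_simps)
  moreover have "adversarial_profile m s \<ge> 0" for s
    using weights by (simp add: adversarial_profile_def sum_nonneg)
  moreover have "adversarial_profile m s = 0" if "s \<notin> rankings m" for s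
  proof -
    have "s \<noteq> ascending m" "\<And>c. s \<noteq> rev_top m c" "\<And>c. s \<noteq> rev_bottom m c"
      using that ascending_in_rankings rev_top_in_rankings rev_bottom_in_rankings by metis+
    then show ?thesis by (simp add: adversarial_profile_def)
  qed
  moreover have "(\<Sum>s\<in>rankings m. adversarial_profile m s) = 1"
    using sum_adversarial_profile[of m "\<lambda>_. 1"] weights by (simp add: algebra_simps)
  ultimately show ?thesis by (simp add: is_profile_def)
qed

lemma ascending_ne_rev_top:
  assumes "m \<ge> 3" "c < m"
  shows "ascending m \<noteq> rev_top m c"
proof
  assume "ascending m = rev_top m c"
  then have "ascending m = {c} \<times> {c<..<m}" using ascending_Int_rev_top[OF assms(2)] by simp
  moreover have "(0, 1) \<in> ascending m" "(1, 2) \<in> ascending m"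
    using assms(1) by (auto simp: ascending_def)
  ultimately show False by auto
qed

lemma ascending_ne_rev_bottom:
  assumes "m \<ge> 3" "c < m"
  shows "ascending m \<noteq> rev_bottom m c"
proof
  assume "ascending m = rev_bottom m c"
  then have "ascending m = {..<c} \<times> {c}" using ascending_Int_rev_bottom[OF assms(2)] by simp
  moreover have "(0, 1) \<in> ascending m" "(1, 2) \<in> ascending m"
    using assms(1) by (auto simp: ascending_def)
  ultimately show False by auto
qed

lemma adversarial_profile_ascending:
  assumes "m \<ge> 3"
  shows "adversarial_profile m (ascending m) = asc_weight m"
proof -
  have "(\<Sum>c<m. of_bool (ascending m = rev_top m c) + of_bool (ascending m = rev_bottom m c)) = (0::real)"
    using ascending_ne_rev_top[OF assms] ascending_ne_rev_bottom[OF assms] by (intro sum.neutral) simp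
  then show ?thesis by (simp add: adversarial_profile_def)
qed

theorem mainTheorem1:
  fixes m :: nat
  assumes "m \<ge> 5"
  shows "\<exists>R r. is_profile m R \<and> r \<in> rankings m \<and>
           R r = (real m / 5) / real (m choose 2) \<and>
           (\<forall>t \<in> sq_kemeny m R. util r t = 0)"
proof (intro exI conjI ballI)
  show "is_profile m (adversarial_profile m)"
    using assms by (simp add: adversarial_profile_is_profile)
  show "ascending m \<in> rankings m" by (rule ascending_in_rankings)
  show "adversarial_profile m (ascending m) = (real m / 5) / real (m choose 2)"
    using assms by (simp add: adversarial_profile_ascending asc_weight_def)
  fix t assume "t \<in> sq_kemeny m (adversarial_profile m)"
  then have "t \<in> rankings m" and "\<not> sq_kemeny_cost m (adversarial_profile m) (descending m)
      < sq_kemeny_cost m (adversarial_profile m) t"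
    using descending_in_rankings by (auto simp: sq_kemeny_def not_less)
  moreover have "m \<ge> 4" using assms by simp
  ultimately have "ascending m \<inter> t = {}"
    using sq_kemeny_cost_descending_less by blast
  then show "util (ascending m) t = 0" by (simp add: util_def)
qed

end
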